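(* Let $D$ be an $n\times n$ distance matrix. If $D(\phi_1,\mathbf X)\ne D$ for some satisfying assignment $\mathbf X$ of $\phi_1$, then there is no graph realisation $(G=(V,E),\Phi)$ of $D$ with $|V|=n+1$.
   Context: $[n]=\{1,\dots,n\}$. An $n\times n$ matrix $D$ with non-negative integer entries is a distance matrix if (i) $D_{ii}=0$ for all $i$ and $D_{ij}>0$ for all $i\ne j$; (ii) $D$ is symmetric; (iii) $D_{iw}+D_{wj}\ge D_{ij}$ for all $i,j,w\in[n]$. A graph realisation of $D$ is a pair $(G,\Phi)$, where $G=(V,E)$ is a finite simple undirected unweighted graph and $\Phi:[n]\to V$ is an injective map such that $d_G(\Phi(i),\Phi(j))=D_{ij}$ for all $i,j\in[n]$; here $d_G$ denotes the shortest-path distance in $G$ (equal to $\infty$ if no path exists). The associated graph $G_D=(V_D,E_D)$ of $D$ is the simple unweighted graph with $V_D=\{v_1,\dots,v_n\}$ and $\{v_i,v_j\}\in E_D$ if and only if $D_{ij}=1$; $d_{G_D}$ is its shortest-path distance. The 2-CNF formula $\phi_1$ over variables $x_1,\dots,x_n$ is the conjunction of: the clause $(\neg x_i\vee\neg x_j)$ for every pair $i,j\in[n]$ with $D_{ij}>2$; and the clauses $(x_i)$ and $(x_j)$ for every pair $i,j\in[n]$ with $D_{ij}=2$ and $d_{G_D}(v_i,v_j)>2$. For a satisfying assignment $\mathbf X$, $G_{\phi_1,\mathbf X}$ is the simple graph on $\{v_1,\dots,v_{n+1}\}$ whose induced subgraph on $\{v_1,\dots,v_n\}$ is $G_D$ and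 in which $v_{n+1}$ is adjacent to $v_i$ ($i\in[n]$) exactly when $x_i$ is true in $\mathbf X$; $D(\phi_1,\mathbf X)$ is the $n\times n$ matrix of shortest-path distances in $G_{\phi_1,\mathbf X}$ between $v_i$ and $v_j$, $i,j\in[n]$. *)

theory Defs
  imports Main "HOL-Library.Extended_Nat"
begin

definition simple_graph :: "'v set \<Rightarrow> 'v set set \<Rightarrow> bool" where
  "simple_graph V E \<longleftrightarrow> finite V \<and> (\<forall>e\<in>E. \<exists>u v. e = {u, v} \<and> u \<noteq> v \<and> u \<in> V \<and> v \<in> V)"

definition is_walk :: "'v set \<Rightarrow> 'v set set \<Rightarrow> 'v list \<Rightarrow> bool" where
  "is_walk V E xs \<longleftrightarrow> xs \<noteq> [] \<and> set xs \<subseteq> V \<and>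
     (\<forall>k. Suc k < length xs \<longrightarrow> {xs ! k, xs ! Suc k} \<in> E)"

definition gdist :: "'v set \<Rightarrow> 'v set set \<Rightarrow> 'v \<Rightarrow> 'v \<Rightarrow> enat" where
  "gdist V E u v =
     (if \<exists>xs. is_walk V E xs \<and> hd xs = u \<and> last xs = v
      then enat (LEAST k. \<exists>xs. is_walk V E xs \<and> hd xs = u \<and> last xs = v \<and> length xs = Suc k)
      else \<infinity>)"

definition distance_matrix :: "nat \<Rightarrow> (nat \<Rightarrow> nat \<Rightarrow> nat) \<Rightarrow> bool" where
  "distance_matrix n D \<longleftrightarrow>
     (\<forall>i\<in>{1..n}. D i i = 0) \<and>
     (\<forall>i\<in>{1..n}. \<forall>j\<in>{1..n}. i \<noteq> j \<longrightarrow> D i j > 0) \<and>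
     (\<forall>i\<in>{1..n}. \<forall>j\<in>{1..n}. D i j = D j i) \<and>
     (\<forall>i\<in>{1..n}. \<forall>j\<in>{1..n}. \<forall>w\<in>{1..n}. D i w + D w j \<ge> D i j)"

definition graph_realisation ::
  "nat \<Rightarrow> (nat \<Rightarrow> nat \<Rightarrow> nat) \<Rightarrow> 'v set \<Rightarrow> 'v set set \<Rightarrow> (nat \<Rightarrow> 'v) \<Rightarrow> bool" where
  "graph_realisation n D V E \<Phi> \<longleftrightarrow>
     simple_graph V E \<and> \<Phi> ` {1..n} \<subseteq> V \<and> inj_on \<Phi> {1..n} \<and>
     (\<forall>i\<in>{1..n}. \<forall>j\<in>{1..n}. gdist V E (\<Phi> i) (\<Phi> j) = enat (D i j))"

text \<open>Associated graph G_D: vertex v_i is represented by the number i.\<close>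
definition GD_edges :: "nat \<Rightarrow> (nat \<Rightarrow> nat \<Rightarrow> nat) \<Rightarrow> nat set set" where
  "GD_edges n D = {{i, j} | i j. i \<in> {1..n} \<and> j \<in> {1..n} \<and> i \<noteq> j \<and> D i j = 1}"

definition dGD :: "nat \<Rightarrow> (nat \<Rightarrow> nat \<Rightarrow> nat) \<Rightarrow> nat \<Rightarrow> nat \<Rightarrow> enat" where
  "dGD n D i j = gdist {1..n} (GD_edges n D) i j"

datatype literal = Pos nat | Neg nat

type_synonym clause = "literal list"

fun lit_val :: "(nat \<Rightarrow> bool) \<Rightarrow> literal \<Rightarrow> bool" where
  "lit_val X (Pos i) = X i"
| "lit_val X (Neg i) = (\<not> X i)"

definition satisfies :: "(nat \<Rightarrow> bool) \<Rightarrow> clause set \<Rightarrow> bool" where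
  "satisfies X F \<longleftrightarrow> (\<forall>c\<in>F. \<exists>l\<in>set c. lit_val X l)"

definition phi1 :: "nat \<Rightarrow> (nat \<Rightarrow> nat \<Rightarrow> nat) \<Rightarrow> clause set" where
  "phi1 n D =
     {[Neg i, Neg j] | i j. i \<in> {1..n} \<and> j \<in> {1..n} \<and> D i j > 2}
   \<union> {[Pos i] | i j. i \<in> {1..n} \<and> j \<in> {1..n} \<and> D i j = 2 \<and> dGD n D i j > 2}
   \<union> {[Pos j] | i j. i \<in> {1..n} \<and> j \<in> {1..n} \<and> D i j = 2 \<and> dGD n D i j > 2}"

text \<open>G_{phi1,X}: vertices {1..n+1}, vertex n+1 is the new vertex.\<close>
definition GX_edges :: "nat \<Rightarrow> (nat \<Rightarrow> nat \<Rightarrow> nat) \<Rightarrow> (nat \<Rightarrow> bool) \<Rightarrow> nat set set" where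
  "GX_edges n D X = GD_edges n D \<union> {{i, Suc n} | i. i \<in> {1..n} \<and> X i}"

definition DX :: "nat \<Rightarrow> (nat \<Rightarrow> nat \<Rightarrow> nat) \<Rightarrow> (nat \<Rightarrow> bool) \<Rightarrow> nat \<Rightarrow> nat \<Rightarrow> enat" where
  "DX n D X i j = gdist {1..Suc n} (GX_edges n D X) i j"

end

theory Submission
  imports Defs
begin

text \<open>
  Both G_{phi1,X} and a realisation G with n + 1 vertices consist of the n named vertices plus
  one extra hub vertex. A walk between named vertices can be cut into steps between named
  vertices that are either single edges or two edges through the hub. Hence any "metric" on the
  named vertices that is at most 1 across an edge and at most 2 across the hub is bounded by
  graph distance. In G_{phi1,X}, edges between named vertices have D = 1 and the clauses
  (not x_i or not x_j) give D \<le> 2 across the hub, so D \<le> D(phi1,X). In G, the same two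
  kinds of steps have D \<le> 1 and D \<le> 2, and for such pairs D(phi1,X) \<le> D follows from the
  construction and the unit clauses of phi1, so D(phi1,X) \<le> D. Thus a realisation forces
  D(phi1,X) = D.
\<close>

lemma all_Suc_less_Cons_Cons:
  "(\<forall>k. Suc k < length (x # y # zs) \<longrightarrow> P k) \<longleftrightarrow> P 0 \<and> (\<forall>k. Suc k < length (y # zs) \<longrightarrow> P (Suc k))"
  by (metis length_Cons less_Suc_eq_0_disj Suc_less_eq not0_implies_Suc zero_less_Suc)

lemma is_walk_singleton [simp]: "is_walk V E [x] \<longleftrightarrow> x \<in> V"
  unfolding is_walk_def by auto

lemma is_walk_Cons_Cons [simp]:
  "is_walk V E (x # y # zs) \<longleftrightarrow> x \<in> V \<and> {x, y} \<in> E \<and> is_walk V E (y # zs)"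
  unfolding is_walk_def all_Suc_less_Cons_Cons by auto

lemma is_walk_append:
  assumes "is_walk V E xs" "is_walk V E ys" "last xs = hd ys"
  shows "is_walk V E (xs @ tl ys)"
  using assms
proof (induction xs rule: induct_list012)
  case 1 then show ?case by (simp add: is_walk_def)
next
  case (2 x)
  then show ?case by (cases ys) (auto simp: is_walk_def)
next
  case (3 x y zs)
  then show ?case by simp
qed

lemma gdist_le_length:
  assumes "is_walk V E xs" "hd xs = u" "last xs = v"
  shows "gdist V E u v \<le> enat (length xs - 1)"
proof -
  have "xs \<noteq> []" using assms(1) by (simp add: is_walk_def)
  then have "(LEAST k. \<exists>xs. is_walk V E xs \<and> hd xs = u \<and> last xs = v \<and> length xs = Suc k)
      \<le> length xs - 1"
    by (intro Least_le) (use assms in auto)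
  then show ?thesis unfolding gdist_def using assms by auto
qed

lemma gdist_enatE:
  assumes "gdist V E u v = enat m"
  obtains xs where "is_walk V E xs" "hd xs = u" "last xs = v" "length xs = Suc m"
proof -
  let ?P = "\<lambda>k. \<exists>xs. is_walk V E xs \<and> hd xs = u \<and> last xs = v \<and> length xs = Suc k"
  obtain xs where xs: "is_walk V E xs" "hd xs = u" "last xs = v"
    using assms unfolding gdist_def by (metis enat.distinct(2))
  moreover have "xs \<noteq> []" using xs(1) by (simp add: is_walk_def)
  ultimately have "?P (length xs - 1)" by auto
  then have "?P (Least ?P)" by (rule LeastI)
  moreover have "m = Least ?P"
    using assms xs unfolding gdist_def by (auto split: if_splits)
  ultimately show ?thesis using that by blast
qed

lemma gdist_refl: "x \<in> V \<Longrightarrow> gdist V E x x = 0"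
  using gdist_le_length[of V E "[x]" x x] by (simp add: enat_0)

lemma gdist_triangle: "gdist V E a c \<le> gdist V E a b + gdist V E b c"
proof (cases "gdist V E a b" ; cases "gdist V E b c")
  fix p q
  assume "gdist V E a b = enat p" "gdist V E b c = enat q"
  then obtain xs ys where
    xs: "is_walk V E xs" "hd xs = a" "last xs = b" "length xs = Suc p" and
    ys: "is_walk V E ys" "hd ys = b" "last ys = c" "length ys = Suc q"
    by (metis gdist_enatE)
  have "is_walk V E (xs @ tl ys)" using is_walk_append[OF xs(1) ys(1)] xs(3) ys(2) by simp
  moreover have "hd (xs @ tl ys) = a" using xs by (cases xs) auto
  moreover have "last (xs @ tl ys) = c"
    using xs ys by (cases ys) (auto simp: last_append)
  ultimately have "gdist V E a c \<le> enat (length (xs @ tl ys) - 1)"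
    by (rule gdist_le_length)
  with xs ys show ?thesis
    using \<open>gdist V E a b = enat p\<close> \<open>gdist V E b c = enat q\<close> by simp
qed auto

lemma gdist_mono:
  assumes "V \<subseteq> V'" "E \<subseteq> E'"
  shows "gdist V' E' a b \<le> gdist V E a b"
proof (cases "gdist V E a b")
  case (enat m)
  then obtain xs where xs: "is_walk V E xs" "hd xs = a" "last xs = b" "length xs = Suc m"
    by (rule gdist_enatE)
  then have "is_walk V' E' xs" using assms unfolding is_walk_def by blast
  with xs enat show ?thesis using gdist_le_length[of V' E' xs a b] by simp
qed simp

section \<open>Lower bounds on distances in a graph with one extra vertex\<close>

context
  fixes V :: "'v set" and E :: "'v set set" and S :: "'v set" and w :: 'v
    and d :: "'v \<Rightarrow> 'v \<Rightarrow> enat"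
  assumes vertices: "V \<subseteq> insert w S" and hub_notin: "w \<notin> S" and no_loop: "{w, w} \<notin> E"
    and d_refl: "\<And>a. a \<in> S \<Longrightarrow> d a a = 0"
    and d_triangle: "\<And>a b c. a \<in> S \<Longrightarrow> b \<in> S \<Longrightarrow> c \<in> S \<Longrightarrow> d a c \<le> d a b + d b c"
    and d_edge: "\<And>a b. a \<in> S \<Longrightarrow> b \<in> S \<Longrightarrow> {a, b} \<in> E \<Longrightarrow> d a b \<le> 1"
    and d_hub: "\<And>a b. a \<in> S \<Longrightarrow> b \<in> S \<Longrightarrow> {a, w} \<in> E \<Longrightarrow> {w, b} \<in> E \<Longrightarrow> d a b \<le> 2"
begin

lemma dist_le_walk_length:
  "is_walk V E xs \<Longrightarrow> hd xs \<in> S \<Longrightarrow> last xs \<in> S \<Longrightarrow> d (hd xs) (last xs) \<le> enat (length xs - 1)"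
proof (induction xs rule: length_induct)
  case (1 xs)
  from \<open>is_walk V E xs\<close> consider a where "xs = [a]" | a y ys where "xs = a # y # ys"
    unfolding is_walk_def by (metis list.exhaust)
  then show ?case
  proof cases
    case 1
    with \<open>hd xs \<in> S\<close> show ?thesis by (simp add: d_refl enat_0)
  next
    case (2 a y ys)
    let ?t = "last xs"
    have a: "a \<in> S" and ay: "{a, y} \<in> E" and walk: "is_walk V E (y # ys)" and t: "?t \<in> S"
      using "1.prems" 2 by auto
    have y: "y \<in> V" using walk by (cases ys) auto
    show ?thesis
    proof (cases "y \<in> S")
      case True
      have "d y ?t \<le> enat (length ys)"
        using "1.IH" walk True t 2 by (metis diff_Suc_1 hd_Cons_tl last_ConsR length_Cons lessI list.discI list.sel(1))
      then have "d a y + d y ?t \<le> 1 + enat (length ys)"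
        using d_edge[OF a True ay] by (rule add_mono[rotated])
      then show ?thesis
        using d_triangle[OF a True t] 2 by (simp add: one_enat_def)
    next
      case False
      with y vertices have "y = w" by auto
      with t hub_notin 2 obtain z zs where ys: "ys = z # zs" by (cases ys) auto
      have wz: "{w, z} \<in> E" and walk': "is_walk V E (z # zs)"
        using walk ys \<open>y = w\<close> by auto
      have "z \<in> V" using walk' by (cases zs) auto
      moreover have "z \<noteq> w" using wz no_loop by auto
      ultimately have z: "z \<in> S" using vertices by auto
      have "d z ?t \<le> enat (length zs)"
        using "1.IH" walk' z t 2 ys by (metis diff_Suc_1 last_ConsR length_Cons less_Suc_eq list.discI list.sel(1))
      then have "d a z + d z ?t \<le> 2 + enat (length zs)"
        using d_hub[OF a z] ay wz \<open>y = w\<close> by (intro add_mono) auto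
      then show ?thesis
        using d_triangle[OF a z t] 2 ys by (simp add: numeral_eq_enat)
    qed
  qed
qed

lemma dist_le_gdist:
  assumes "s \<in> S" "t \<in> S"
  shows "d s t \<le> gdist V E s t"
proof (cases "gdist V E s t")
  case (enat m)
  then obtain xs where "is_walk V E xs" "hd xs = s" "last xs = t" "length xs = Suc m"
    by (rule gdist_enatE)
  with assms enat show ?thesis using dist_le_walk_length by fastforce
qed simp

end

lemma GD_edgeD:
  assumes "distance_matrix n D" "{a, b} \<in> GD_edges n D"
  shows "a \<in> {1..n} \<and> b \<in> {1..n} \<and> D a b = 1"
  using assms unfolding GD_edges_def distance_matrix_def by (auto simp: doubleton_eq_iff)

lemma GX_edge_within_GD:
  "{a, b} \<in> GX_edges n D X \<Longrightarrow> a \<in> {1..n} \<Longrightarrow> b \<in> {1..n} \<Longrightarrow> {a, b} \<in> GD_edges n D"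
  unfolding GX_edges_def by (auto simp: doubleton_eq_iff)

lemma GX_edge_new_vertex_iff: "{a, Suc n} \<in> GX_edges n D X \<longleftrightarrow> a \<in> {1..n} \<and> X a"
  unfolding GX_edges_def GD_edges_def by (auto simp: doubleton_eq_iff)

lemma DX_refl: "a \<in> {1..n} \<Longrightarrow> DX n D X a a = 0"
  unfolding DX_def by (simp add: gdist_refl)

lemma DX_triangle: "DX n D X a c \<le> DX n D X a b + DX n D X b c"
  unfolding DX_def by (rule gdist_triangle)

lemma DX_le_dGD: "DX n D X a b \<le> dGD n D a b"
  unfolding DX_def dGD_def GX_edges_def by (rule gdist_mono) auto

lemma satisfies_phi1_far:
  assumes "satisfies X (phi1 n D)" "a \<in> {1..n}" "b \<in> {1..n}" "X a" "X b"
  shows "D a b \<le> 2"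
proof (rule ccontr)
  assume "\<not> D a b \<le> 2"
  then have "[Neg a, Neg b] \<in> phi1 n D" using assms(2,3) unfolding phi1_def by auto
  with assms(1,4,5) show False unfolding satisfies_def by fastforce
qed

lemma satisfies_phi1_dist2:
  assumes "satisfies X (phi1 n D)" "a \<in> {1..n}" "b \<in> {1..n}" "D a b = 2" "dGD n D a b > 2"
  shows "X a \<and> X b"
proof -
  have "[Pos a] \<in> phi1 n D" "[Pos b] \<in> phi1 n D"
    using assms(2-5) unfolding phi1_def by blast+
  with assms(1) show ?thesis unfolding satisfies_def by fastforce
qed

lemma DX_le_D_if_le_2:
  assumes dm: "distance_matrix n D" and sat: "satisfies X (phi1 n D)"
    and a: "a \<in> {1..n}" and b: "b \<in> {1..n}" and le2: "D a b \<le> 2"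
  shows "DX n D X a b \<le> enat (D a b)"
proof -
  have D_pos: "a \<noteq> b \<Longrightarrow> D a b > 0" and "D a a = 0"
    using dm a b unfolding distance_matrix_def by auto
  consider "D a b = 0" | "D a b = 1" | "D a b = 2" using le2 by linarith
  then show ?thesis
  proof cases
    case 1
    with D_pos have "a = b" by auto
    with a show ?thesis by (simp add: DX_refl)
  next
    case 2
    with \<open>D a a = 0\<close> have "a \<noteq> b" by auto
    with a b 2 have "{a, b} \<in> GX_edges n D X"
      unfolding GX_edges_def GD_edges_def by blast
    with a b 2 show ?thesis
      unfolding DX_def using gdist_le_length[of _ _ "[a, b]"] by auto
  next
    case 3
    show ?thesis
    proof (cases "dGD n D a b > 2")
      case False
      then show ?thesis using DX_le_dGD[of n D X a b] 3 by (simp add: numeral_eq_enat)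
    next
      case True
      with sat a b 3 have "X a" "X b" by (auto dest: satisfies_phi1_dist2)
      then have "is_walk {1..Suc n} (GX_edges n D X) [a, Suc n, b]"
        using a b GX_edge_new_vertex_iff[of _ n D X] by (auto simp: insert_commute)
      from gdist_le_length[OF this, of a b] 3 show ?thesis
        unfolding DX_def by (simp add: numeral_2_eq_2)
    qed
  qed
qed

lemma D_le_DX:
  assumes dm: "distance_matrix n D" and sat: "satisfies X (phi1 n D)"
    and i: "i \<in> {1..n}" and j: "j \<in> {1..n}"
  shows "enat (D i j) \<le> DX n D X i j"
  unfolding DX_def
proof (rule dist_le_gdist[where S = "{1..n}" and w = "Suc n" and d = "\<lambda>a b. enat (D a b)"])
  show "{Suc n, Suc n} \<notin> GX_edges n D X"
    using GX_edge_new_vertex_iff[of "Suc n" n D X] by simp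
next
  fix a assume "a \<in> {1..n}"
  with dm show "enat (D a a) = 0" unfolding distance_matrix_def by (simp add: enat_0)
next
  fix a b c assume "a \<in> {1..n}" "b \<in> {1..n}" "c \<in> {1..n}"
  with dm show "enat (D a c) \<le> enat (D a b) + enat (D b c)"
    unfolding distance_matrix_def by simp
next
  fix a b assume "a \<in> {1..n}" "b \<in> {1..n}" "{a, b} \<in> GX_edges n D X"
  with dm have "D a b = 1" by (blast dest: GX_edge_within_GD GD_edgeD)
  then show "enat (D a b) \<le> 1" by (simp add: one_enat_def)
next
  fix a b assume "a \<in> {1..n}" "b \<in> {1..n}"
    "{a, Suc n} \<in> GX_edges n D X" "{Suc n, b} \<in> GX_edges n D X"
  then have "X a" "X b" using GX_edge_new_vertex_iff by (auto simp: insert_commute)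
  with sat \<open>a \<in> {1..n}\<close> \<open>b \<in> {1..n}\<close> have "D a b \<le> 2" by (rule satisfies_phi1_far)
  then show "enat (D a b) \<le> 2" by (simp add: numeral_eq_enat)
qed (use i j in auto)

lemma realisation_D_le_walk_length:
  assumes "graph_realisation n D V E \<Phi>" "a \<in> {1..n}" "b \<in> {1..n}"
    and "is_walk V E xs" "hd xs = \<Phi> a" "last xs = \<Phi> b"
  shows "D a b \<le> length xs - 1"
  using gdist_le_length[OF assms(4-6)] assms(1-3) unfolding graph_realisation_def by simp

lemma DX_le_D:
  assumes dm: "distance_matrix n D" and sat: "satisfies X (phi1 n D)"
    and real: "graph_realisation n D V E \<Phi>"
    and V: "V = insert u (\<Phi> ` {1..n})" and u: "u \<notin> \<Phi> ` {1..n}"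
    and i: "i \<in> {1..n}" and j: "j \<in> {1..n}"
  shows "DX n D X i j \<le> enat (D i j)"
proof -
  have inj: "inj_on \<Phi> {1..n}" and "simple_graph V E"
    and D_gdist: "gdist V E (\<Phi> i) (\<Phi> j) = enat (D i j)"
    using real i j unfolding graph_realisation_def by auto
  then have no_loop: "{u, u} \<notin> E" unfolding simple_graph_def by auto
  let ?idx = "the_inv_into {1..n} \<Phi>"
  have idx: "?idx (\<Phi> a) = a" if "a \<in> {1..n}" for a
    using the_inv_into_f_f[OF inj that] .
  have DX_le_2: "DX n D X a b \<le> enat k" if "a \<in> {1..n}" "b \<in> {1..n}" "D a b \<le> k" "k \<le> 2" for a b k
    using DX_le_D_if_le_2[OF dm sat that(1,2)] that(3,4) by (meson enat_ord_simps(1) order_trans)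
  have "DX n D X (?idx (\<Phi> i)) (?idx (\<Phi> j)) \<le> gdist V E (\<Phi> i) (\<Phi> j)"
  proof (rule dist_le_gdist[where S = "\<Phi> ` {1..n}" and w = u and d = "\<lambda>x y. DX n D X (?idx x) (?idx y)"])
    fix x assume "x \<in> \<Phi> ` {1..n}"
    then show "DX n D X (?idx x) (?idx x) = 0" using idx DX_refl by auto
  next
    fix x y z
    show "DX n D X (?idx x) (?idx z) \<le> DX n D X (?idx x) (?idx y) + DX n D X (?idx y) (?idx z)"
      by (rule DX_triangle)
  next
    fix x y assume "x \<in> \<Phi> ` {1..n}" "y \<in> \<Phi> ` {1..n}" "{x, y} \<in> E"
    then obtain a b where ab: "a \<in> {1..n}" "b \<in> {1..n}" "x = \<Phi> a" "y = \<Phi> b" "{\<Phi> a, \<Phi> b} \<in> E"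
      by blast
    then have "is_walk V E [\<Phi> a, \<Phi> b]" using V by auto
    from realisation_D_le_walk_length[OF real ab(1,2) this] have "D a b \<le> 1" by simp
    with ab show "DX n D X (?idx x) (?idx y) \<le> 1"
      using DX_le_2[of a b 1] idx by (simp add: one_enat_def)
  next
    fix x y assume "x \<in> \<Phi> ` {1..n}" "y \<in> \<Phi> ` {1..n}" "{x, u} \<in> E" "{u, y} \<in> E"
    then obtain a b where ab: "a \<in> {1..n}" "b \<in> {1..n}" "x = \<Phi> a" "y = \<Phi> b"
      "{\<Phi> a, u} \<in> E" "{u, \<Phi> b} \<in> E"
      by blast
    then have "is_walk V E [\<Phi> a, u, \<Phi> b]" using V by auto
    from realisation_D_le_walk_length[OF real ab(1,2) this] have "D a b \<le> 2" by simp
    with ab show "DX n D X (?idx x) (?idx y) \<le> 2"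
      using DX_le_2[of a b 2] idx by (simp add: numeral_eq_enat)
  qed (use V u no_loop i j in auto)
  with D_gdist show ?thesis using idx i j by simp
qed

theorem mainTheorem14:
  fixes n :: nat and D :: "nat \<Rightarrow> nat \<Rightarrow> nat" and X :: "nat \<Rightarrow> bool"
  assumes "distance_matrix n D"
    and "satisfies X (phi1 n D)"
    and "\<exists>i\<in>{1..n}. \<exists>j\<in>{1..n}. DX n D X i j \<noteq> enat (D i j)"
  shows "\<not> (\<exists>(V :: 'v set) E \<Phi>. graph_realisation n D V E \<Phi> \<and> card V = n + 1)"
proof
  assume "\<exists>(V :: 'v set) E \<Phi>. graph_realisation n D V E \<Phi> \<and> card V = n + 1"
  then obtain V :: "'v set" and E \<Phi> where real: "graph_realisation n D V E \<Phi>" and "card V = n + 1"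
    by blast
  moreover have "finite V" "\<Phi> ` {1..n} \<subseteq> V" "card (\<Phi> ` {1..n}) = n"
    using real unfolding graph_realisation_def simple_graph_def by (auto simp: card_image)
  ultimately have "card (V - \<Phi> ` {1..n}) = 1" by (simp add: card_Diff_subset finite_subset)
  then obtain u where "V - \<Phi> ` {1..n} = {u}" by (rule card_1_singletonE)
  then have V: "V = insert u (\<Phi> ` {1..n})" and u: "u \<notin> \<Phi> ` {1..n}"
    using \<open>\<Phi> ` {1..n} \<subseteq> V\<close> by auto
  have "DX n D X i j = enat (D i j)" if "i \<in> {1..n}" "j \<in> {1..n}" for i j
    using DX_le_D[OF assms(1,2) real V u that] D_le_DX[OF assms(1,2) that] by (rule antisym)
  with assms(3) show False by blast
qed

end
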